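(* Let $\phi=\tilde p/p$ be a degree $(n,1)$ rational inner function as in the context and define $W(x,\zeta)=W_x(\zeta)=\frac{|p_1(\zeta)|^2-|p_2(\zeta)|^2}{|\tilde p_1(\zeta)-xp_2(\zeta)|^2}$ for $(x,\zeta)\in\mathbb{T}^2$. Then: (i) $W$ is well defined and continuous on $\mathbb{T}^2$ except possibly at the finitely many points $(\alpha,\tau_k)$ for which $\alpha$ is an exceptional value of $\phi$ and $L_k\subseteq\mathcal{C}_\alpha$; (ii) for each $\alpha\in\mathbb{T}$, $W_\alpha$ has at most finitely many discontinuities on $\mathbb{T}$, all removable; in particular $W_\alpha$ coincides $m$-a.e. on $\mathbb{T}$ with a bounded continuous function.
   Context: $\mathbb{D}$ is the open unit disk, $\mathbb{T}$ the unit circle, $m$ normalized Lebesgue measure on $\mathbb{T}$. Fix $n\ge1$. Let $p\in\mathbb{C}[z_1,z_2]$ have no zeros on $\mathbb{D}^2$, degree at most $n$ in $z_1$ and at most $1$ in $z_2$; write $p(z)=p_1(z_1)+z_2p_2(z_1)$. Set $\tilde p(z)=z_1^nz_2\overline{p(1/\bar z_1,1/\bar z_2)}=z_2\tilde p_1(z_1)+\tilde p_2(z_1)$ with $\tilde p_i(z)=z^n\overline{p_i(1/\bar z)}$. Assume $\tilde p$ has degree exactly $(n,1)$ and $p,\tilde p$ have no common factor, so $\phi=\tilde p/p$ is a degree $(n,1)$ rational inner function. The zeros of $p$ on $\mathbb{T}^2$ are finitely many points $(\tau_k,\lambda_k)$; $\phi^*$ (non-tangential limit) exists and is unimodular at every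 point of $\mathbb{T}^2$. $\alpha\in\mathbb{T}$ is exceptional if $\phi^*(\tau_k,\lambda_k)=\alpha$ for some $k$. $L_k=\{\tau_k\}\times\mathbb{T}$; $\mathcal{C}_\alpha=\{\zeta\in\mathbb{T}^2:\tilde p(\zeta)=\alpha p(\zeta)\}$. *)

theory Defs
  imports "HOL-Analysis.Analysis" "HOL-Computational_Algebra.Polynomial"
begin

text \<open>Reflection of a one-variable polynomial of degree at most n:
  refl n q (z) = z^n * conj (q (1 / conj z)), i.e. coefficient i is cnj (coeff q (n - i)).\<close>
definition refl :: "nat \<Rightarrow> complex poly \<Rightarrow> complex poly" where
  "refl n q = (\<Sum>j\<le>n. monom (cnj (coeff q j)) (n - j))"

definition pev :: "complex poly \<Rightarrow> complex poly \<Rightarrow> complex \<Rightarrow> complex \<Rightarrow> complex" where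
  "pev p1 p2 z1 z2 = poly p1 z1 + z2 * poly p2 z1"

definition ptev :: "nat \<Rightarrow> complex poly \<Rightarrow> complex poly \<Rightarrow> complex \<Rightarrow> complex \<Rightarrow> complex" where
  "ptev n p1 p2 z1 z2 = z2 * poly (refl n p1) z1 + poly (refl n p2) z1"

definition rif :: "nat \<Rightarrow> complex poly \<Rightarrow> complex poly \<Rightarrow> complex \<times> complex \<Rightarrow> complex" where
  "rif n p1 p2 z = ptev n p1 p2 (fst z) (snd z) / pev p1 p2 (fst z) (snd z)"

definition nt_region :: "complex \<times> complex \<Rightarrow> real \<Rightarrow> (complex \<times> complex) set" where
  "nt_region \<zeta> c = {z. norm (fst z) < 1 \<and> norm (snd z) < 1 \<and>
      norm (fst \<zeta> - fst z) < c * (1 - norm (fst z)) \<and>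
      norm (snd \<zeta> - snd z) < c * (1 - norm (snd z))}"

definition nt_limit :: "(complex \<times> complex \<Rightarrow> complex) \<Rightarrow> complex \<times> complex \<Rightarrow> complex \<Rightarrow> bool" where
  "nt_limit f \<zeta> L \<longleftrightarrow> (\<forall>c>1. (f \<longlongrightarrow> L) (at \<zeta> within nt_region \<zeta> c))"

definition Wfun :: "nat \<Rightarrow> complex poly \<Rightarrow> complex poly \<Rightarrow> complex \<Rightarrow> complex \<Rightarrow> real" where
  "Wfun n p1 p2 x \<zeta> =
     ((cmod (poly p1 \<zeta>))\<^sup>2 - (cmod (poly p2 \<zeta>))\<^sup>2) /
     (cmod (poly (refl n p1) \<zeta> - x * poly p2 \<zeta>))\<^sup>2"

text \<open>The exceptional points (alpha, tau_k): tau_k is the first coordinate of a zero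
  (tau_k, lambda_k) of p on the torus, the non-tangential limit of phi there is alpha,
  and L_k = {tau_k} x T is contained in C_alpha.\<close>
definition exc_pts :: "nat \<Rightarrow> complex poly \<Rightarrow> complex poly \<Rightarrow> (complex \<times> complex) set" where
  "exc_pts n p1 p2 = {(\<alpha>, \<tau>) | \<alpha> \<tau>. \<exists>lam.
      \<tau> \<in> sphere 0 1 \<and> lam \<in> sphere 0 1 \<and> pev p1 p2 \<tau> lam = 0 \<and>
      nt_limit (rif n p1 p2) (\<tau>, lam) \<alpha> \<and>
      (\<forall>\<mu>\<in>sphere 0 1. ptev n p1 p2 \<tau> \<mu> = \<alpha> * pev p1 p2 \<tau> \<mu>)}"

end

theory Submission
  imports Defs "HOL-Complex_Analysis.Complex_Analysis" "HOL-Computational_Algebra.Polynomial_Factorial"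
    "HOL-Computational_Algebra.Field_as_Ring"
begin

text \<open>On the circle, W x is the real part of the Cayley transform (p1 + B) / (p1 - B) of the
  Schur function B / p1, B = cnj x * refl p2, which is bounded by 1 on the closed disc by the
  maximum modulus principle. W x can only blow up at a boundary zero \<zeta> of p1 - B = (z - \<zeta>) h.
  A boundary Julia-Caratheodory argument (if Re ((z - \<zeta>)^m K z) \<ge> 0 on the disc, then
  K \<zeta> = 0 for m \<ge> 2 and \<zeta> K \<zeta> is real for m = 1) shows that h \<zeta> \<noteq> 0 and that
  \<zeta> h \<zeta> / p1 \<zeta> is real; since Re (\<zeta> / (z - \<zeta>)) = -1/2 on the circle, W x has a
  finite limit at \<zeta>. Moreover such a
  zero makes the line {\<zeta>} \<times> T lie in C_x, and factoring numerator and denominator of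
  \<phi> - x at the torus zero (\<zeta>, -p1 \<zeta> / p2 \<zeta>) of p shows that \<phi> has non-tangential
  limit x there, so (x, \<zeta>) is exceptional. There are finitely many exceptional points,
  since \<zeta> must be a root of p1 refl p1 - p2 refl p2, which is a non-zero polynomial by
  coprimality.\<close>
section \<open>Reflected polynomials\<close>

lemma poly_altdef_le:
  fixes q :: "'a::comm_semiring_1 poly"
  assumes "degree q \<le> n"
  shows "poly q w = (\<Sum>j\<le>n. coeff q j * w ^ j)"
proof -
  have "poly q w = (\<Sum>j\<le>degree q. coeff q j * w ^ j)" by (simp add: poly_altdef)
  also have "\<dots> = (\<Sum>j\<le>n. coeff q j * w ^ j)"
    by (rule sum.mono_neutral_left) (use assms in \<open>auto simp: coeff_eq_0\<close>)
  finally show ?thesis .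
qed

lemma poly_eqI_nonzero:
  fixes p q :: "complex poly"
  assumes "\<And>z. z \<noteq> 0 \<Longrightarrow> poly p z = poly q z"
  shows "p = q"
proof -
  have "- {0} \<subseteq> {z. poly (p - q) z = 0}" using assms by auto
  then have "infinite {z. poly (p - q) z = 0}"
    by (metis finite_compl infinite_UNIV_char_0 finite_subset finite.emptyI finite_insert)
  then have "p - q = 0" using poly_roots_finite by blast
  then show ?thesis by simp
qed

lemma cnj_eq_inverse_unimodular: "cmod z = 1 \<Longrightarrow> cnj z = inverse z"
  by (simp add: inverse_eq_divide complex_div_cnj[of 1 z])

lemma poly_refl: "poly (refl n q) z = (\<Sum>j\<le>n. cnj (coeff q j) * z ^ (n - j))"
  by (simp add: refl_def poly_sum poly_monom)

lemma degree_refl: "degree (refl n q) \<le> n"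
  unfolding refl_def by (rule degree_sum_le) (auto intro: order.trans[OF degree_monom_le])

lemma coeff_refl: "coeff (refl n q) i = (if i \<le> n then cnj (coeff q (n - i)) else 0)"
proof -
  have "coeff (refl n q) i = (\<Sum>j\<le>n. if n - j = i then cnj (coeff q j) else 0)"
    by (simp add: refl_def coeff_sum coeff_monom)
  also have "\<dots> = (\<Sum>j\<le>n. if j = n - i \<and> i \<le> n then cnj (coeff q j) else 0)"
    by (rule sum.cong) auto
  finally show ?thesis by (cases "i \<le> n") (simp_all add: sum.delta)
qed

lemma refl_refl: "degree q \<le> n \<Longrightarrow> refl n (refl n q) = q"
  by (rule poly_eqI) (auto simp: coeff_refl coeff_eq_0)

lemma refl_diff: "refl n (p - q) = refl n p - refl n q"
  by (rule poly_eqI) (simp add: coeff_refl)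

lemma refl_smult: "refl n (smult c p) = smult (cnj c) (refl n p)"
  by (rule poly_eqI) (simp add: coeff_refl)

lemma refl_0 [simp]: "refl n 0 = 0"
  by (rule poly_eqI) (simp add: coeff_refl)

lemma refl_eq_0_iff: assumes "degree q \<le> n" shows "refl n q = 0 \<longleftrightarrow> q = 0"
  using refl_refl[OF assms] by fastforce

lemma poly_refl_nonzero:
  assumes "degree q \<le> n" "z \<noteq> 0"
  shows "poly (refl n q) z = z ^ n * cnj (poly q (1 / cnj z))"
proof -
  have "z ^ n * cnj (poly q (1 / cnj z)) = (\<Sum>j\<le>n. cnj (coeff q j) * (z ^ n * (1/z) ^ j))"
    by (simp add: poly_altdef_le[OF assms(1)] sum_distrib_left mult_ac power_divide)
  also have "\<dots> = (\<Sum>j\<le>n. cnj (coeff q j) * z ^ (n - j))"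
  proof (rule sum.cong[OF refl])
    fix j assume "j \<in> {..n}"
    then have "z ^ n = z ^ (n - j) * z ^ j" by (simp add: power_add[symmetric])
    then show "cnj (coeff q j) * (z ^ n * (1/z) ^ j) = cnj (coeff q j) * z ^ (n - j)"
      using assms(2) by (simp add: power_divide)
  qed
  finally show ?thesis by (simp add: poly_refl)
qed

lemma poly_refl_unimodular:
  assumes "degree q \<le> n" "cmod z = 1"
  shows "poly (refl n q) z = z ^ n * cnj (poly q z)"
proof -
  have z0: "z \<noteq> 0" using assms by auto
  have "z * cnj z = 1" using assms(2) complex_norm_square[of z] by simp
  then have "1 / cnj z = z" using z0 by (simp add: divide_simps)
  then show ?thesis using poly_refl_nonzero[OF assms(1) z0] by simp
qed

lemma norm_poly_refl_unimodular:
  "degree q \<le> n \<Longrightarrow> cmod z = 1 \<Longrightarrow> cmod (poly (refl n q) z) = cmod (poly q z)"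
  by (simp add: poly_refl_unimodular norm_mult norm_power)

lemma refl_linear_factor:
  fixes w :: complex
  assumes "degree q \<le> n - 1" "n \<ge> 1"
  shows "refl n ([:-w, 1:] * q) = [:1, - cnj w:] * refl (n - 1) q"
proof (rule poly_eqI_nonzero)
  fix z :: complex assume z: "z \<noteq> 0"
  have d: "degree ([:-w, 1:] * q) \<le> n"
    using assms degree_mult_le[of "[:-w,1:]" q] by (cases "q = 0") auto
  have zn: "z ^ n = z * z ^ (n - 1)" using assms(2) by (simp add: power_eq_if)
  have "poly (refl n ([:-w, 1:] * q)) z = z ^ n * cnj (poly ([:-w, 1:] * q) (1 / cnj z))"
    by (rule poly_refl_nonzero[OF d z])
  also have "\<dots> = z ^ n * ((1 / z - cnj w) * cnj (poly q (1 / cnj z)))"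
    by (simp only: poly_mult) simp
  also have "\<dots> = (1 - cnj w * z) * (z ^ (n - 1) * cnj (poly q (1 / cnj z)))"
    using z zn by (simp add: field_simps)
  also have "\<dots> = poly ([:1, - cnj w:] * refl (n - 1) q) z"
    by (simp only: poly_mult poly_refl_nonzero[OF assms(1) z]) simp
  finally show "poly (refl n ([:-w, 1:] * q)) z = poly ([:1, - cnj w:] * refl (n - 1) q) z" .
qed

section \<open>Boundary zeros of Schur-type quotients\<close>

lemma approach_along_direction_in_disc:
  fixes \<zeta> e :: complex and t :: real
  assumes "cmod \<zeta> = 1" "t > 0" "t * (cmod e)^2 < 2 * Re e"
  shows "cmod (\<zeta> - of_real t * \<zeta> * e) < 1"
proof -
  have "(cmod (1 - of_real t * e))^2 = 1 - t * (2 * Re e - t * (cmod e)^2)"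
    by (simp only: cmod_power2) (simp add: power2_eq_square algebra_simps)
  also have "\<dots> < 1" using assms by simp
  finally have "cmod (1 - of_real t * e) < 1"
    by (simp add: power_less_one_iff)
  moreover have "\<zeta> - of_real t * \<zeta> * e = \<zeta> * (1 - of_real t * e)" by (simp add: algebra_simps)
  ultimately show ?thesis using assms(1) by (simp add: norm_mult)
qed

lemma Re_nonneg_boundary_direction:
  fixes K :: "complex \<Rightarrow> complex" and \<zeta> e :: complex
  assumes z1: "cmod \<zeta> = 1" and e: "Re e > 0"
    and pos: "\<And>z. cmod z < 1 \<Longrightarrow> 0 \<le> Re ((z - \<zeta>)^m * K z)"
    and cont: "isCont K \<zeta>"
  shows "0 \<le> Re ((- \<zeta> * e)^m * K \<zeta>)"
proof -
  define X where "X = (- \<zeta> * e)^m"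
  define z where "z = (\<lambda>t::real. \<zeta> - of_real t * \<zeta> * e)"
  have cme: "(cmod e)^2 > 0" using e by auto
  define b where "b = 2 * Re e / (cmod e)^2"
  have b0: "b > 0" using e cme by (simp add: b_def)
  have "\<forall>\<^sub>F t in at_right 0. 0 \<le> Re (X * K (z t))"
  proof (rule eventually_at_rightI[OF _ b0])
    fix t assume t: "t \<in> {0<..<b}"
    then have "t * (cmod e)^2 < 2 * Re e" using cme by (simp add: b_def pos_less_divide_eq)
    then have "0 \<le> Re ((z t - \<zeta>)^m * K (z t))"
      using approach_along_direction_in_disc[OF z1] t by (intro pos) (simp add: z_def)
    moreover have "z t - \<zeta> = of_real t * (- \<zeta> * e)" by (simp add: z_def)
    then have "(z t - \<zeta>)^m = of_real (t^m) * X"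
      unfolding X_def by (simp only: power_mult_distrib of_real_power)
    ultimately have "0 \<le> t^m * Re (X * K (z t))" by (simp add: mult.assoc)
    moreover have "t^m > 0" using t by simp
    ultimately show "0 \<le> Re (X * K (z t))" by (simp add: zero_le_mult_iff)
  qed
  moreover have "(z \<longlongrightarrow> \<zeta>) (at_right 0)"
    unfolding z_def by (rule tendsto_eq_intros tendsto_ident_at | simp)+
  then have "((\<lambda>t. Re (X * K (z t))) \<longlongrightarrow> Re (X * K \<zeta>)) (at_right 0)"
    using cont isCont_tendsto_compose by (intro tendsto_intros) blast
  ultimately have "0 \<le> Re (X * K \<zeta>)"
    by (intro tendsto_lowerbound) auto
  then show ?thesis by (simp add: X_def)
qed

lemma Re_nonneg_simple_boundary_factor:
  fixes K :: "complex \<Rightarrow> complex" and \<zeta> :: complex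
  assumes z1: "cmod \<zeta> = 1"
    and pos: "\<And>z. cmod z < 1 \<Longrightarrow> 0 \<le> Re ((z - \<zeta>) * K z)"
    and cont: "isCont K \<zeta>"
  shows "Im (\<zeta> * K \<zeta>) = 0" "Re (\<zeta> * K \<zeta>) \<le> 0"
proof -
  have key: "0 \<le> N * Im (\<zeta> * K \<zeta>) - Re (\<zeta> * K \<zeta>)" for N :: real
  proof -
    have "0 \<le> Re ((- \<zeta> * (1 + \<i> * of_real N))^1 * K \<zeta>)"
      by (rule Re_nonneg_boundary_direction[OF z1 _ _ cont]) (use pos in simp_all)
    then show ?thesis by (simp add: algebra_simps)
  qed
  from key[of 0] show "Re (\<zeta> * K \<zeta>) \<le> 0" by simp
  show "Im (\<zeta> * K \<zeta>) = 0"
  proof (rule ccontr)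
    assume ne: "Im (\<zeta> * K \<zeta>) \<noteq> 0"
    from key[of "(Re (\<zeta> * K \<zeta>) - 1) / Im (\<zeta> * K \<zeta>)"] ne show False by simp
  qed
qed

lemma Re_nonneg_multiple_boundary_factor:
  fixes K :: "complex \<Rightarrow> complex" and \<zeta> :: complex
  assumes z1: "cmod \<zeta> = 1" and m: "m \<ge> 2"
    and pos: "\<And>z. cmod z < 1 \<Longrightarrow> 0 \<le> Re ((z - \<zeta>)^m * K z)"
    and cont: "isCont K \<zeta>"
  shows "K \<zeta> = 0"
proof -
  define X where "X = (- \<zeta>)^m * K \<zeta> * cis (- 3 * pi / 4)"
  \<comment> \<open>The directions cis(\<theta>/m), \<theta> = -3\<pi>/4 + k\<pi>/2, point into the disc since m \<ge> 2;
    their m-th powers rotate X by the four powers of \<i>.\<close>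
  have rot: "0 \<le> Re (X * \<i>^k)" if "k < 4" for k :: nat
  proof -
    define \<theta> where "\<theta> = - 3 * pi / 4 + k * (pi / 2)"
    have "0 \<le> k * pi" "k * pi \<le> 3 * pi" using that by auto
    then have "\<bar>\<theta>\<bar> \<le> 3 * pi / 4" unfolding \<theta>_def by linarith
    moreover have "\<bar>\<theta> / m\<bar> \<le> \<bar>\<theta>\<bar> / 2" using m by (simp add: abs_divide divide_le_eq mult_left_mono)
    ultimately have "\<bar>\<theta> / m\<bar> \<le> 3 * pi / 8" by linarith
    then have "- (pi / 2) < \<theta> / m" "\<theta> / m < pi / 2"
      using pi_gt_zero unfolding abs_le_iff by linarith+
    then have "0 < Re (cis (\<theta> / m))" by (simp add: cos_gt_zero_pi)
    from Re_nonneg_boundary_direction[OF z1 this pos cont]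
    have "0 \<le> Re ((- \<zeta>)^m * K \<zeta> * cis (\<theta> / m) ^ m)"
      unfolding power_mult_distrib by (simp only: mult_ac)
    also have "cis (\<theta> / m) ^ m = cis \<theta>" using m by (simp add: Complex.DeMoivre)
    also have "\<dots> = cis (- 3 * pi / 4) * cis (k * (pi / 2))"
      by (simp only: \<theta>_def cis_mult)
    also have "cis (k * (pi / 2)) = \<i>^k" by (simp only: Complex.DeMoivre[symmetric] cis_pi_half)
    finally show ?thesis by (simp add: X_def mult_ac)
  qed
  have "Re X = 0 \<and> Im X = 0"
    using rot[of 0] rot[of 1] rot[of 2] rot[of 3] by (simp add: power_numeral_reduce)
  then have "X = 0" by (simp add: complex_eq_iff)
  then show ?thesis using z1 by (auto simp: X_def)
qed

lemma schur_boundary_zero: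
  fixes f g h :: "complex poly" and \<zeta> :: complex
  assumes z1: "cmod \<zeta> = 1"
    and le: "\<And>z. cmod z \<le> 1 \<Longrightarrow> cmod (poly f z) \<le> cmod (poly g z)"
    and nz: "\<And>z. cmod z \<le> 1 \<Longrightarrow> poly g z \<noteq> 0"
    and fac: "g - f = [:-\<zeta>, 1:] * h"
  shows "Im (\<zeta> * (poly h \<zeta> / poly g \<zeta>)) = 0"
    and "Re (\<zeta> * (poly h \<zeta> / poly g \<zeta>)) \<le> 0"
    and "g \<noteq> f \<Longrightarrow> poly h \<zeta> \<noteq> 0"
proof -
  have gz: "poly g \<zeta> \<noteq> 0" using nz z1 by simp
  have Re_quotient: "0 \<le> Re (poly (g - f) z / poly g z)" if "cmod z < 1" for z
  proof -
    have "cmod (poly f z / poly g z) \<le> 1"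
      using le[of z] nz[of z] that by (simp add: norm_divide divide_le_eq)
    then have "Re (poly f z / poly g z) \<le> 1"
      using complex_Re_le_cmod order_trans by blast
    then show ?thesis using nz[of z] that by (simp add: diff_divide_distrib)
  qed
  have pos: "0 \<le> Re ((z - \<zeta>) * (poly h z / poly g z))" if "cmod z < 1" for z
    using Re_quotient[OF that] by (simp add: fac algebra_simps)
  have cont: "isCont (\<lambda>z. poly h z / poly g z) \<zeta>"
    using gz by (intro continuous_intros) auto
  show "Im (\<zeta> * (poly h \<zeta> / poly g \<zeta>)) = 0" "Re (\<zeta> * (poly h \<zeta> / poly g \<zeta>)) \<le> 0"
    using Re_nonneg_simple_boundary_factor[OF z1 pos cont] by auto
  show "poly h \<zeta> \<noteq> 0" if ne: "g \<noteq> f"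
  proof
    assume "poly h \<zeta> = 0"
    then obtain h' where "h = [:-\<zeta>, 1:] * h'" by (auto simp: poly_eq_0_iff_dvd elim!: dvdE)
    then have "g - f = [:-\<zeta>, 1:]^2 * h'" by (simp only: fac power2_eq_square mult.assoc)
    then have "[:-\<zeta>, 1:]^2 dvd g - f" by (metis dvd_triv_left)
    then have m: "order \<zeta> (g - f) \<ge> 2" using ne by (simp add: order_divides)
    obtain k where k: "g - f = [:-\<zeta>, 1:]^order \<zeta> (g - f) * k" "\<not> [:-\<zeta>, 1:] dvd k"
      using order_decomp[of "g - f" \<zeta>] ne by auto
    have "0 \<le> Re ((z - \<zeta>)^(order \<zeta> (g - f)) * (poly k z / poly g z))" if "cmod z < 1" for z
      using Re_quotient[OF that] by (subst (asm) k(1)) (simp add: poly_power)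
    moreover have "isCont (\<lambda>z. poly k z / poly g z) \<zeta>"
      using gz by (intro continuous_intros) auto
    ultimately have "poly k \<zeta> / poly g \<zeta> = 0"
      by (rule Re_nonneg_multiple_boundary_factor[OF z1 m])
    then show False using k(2) gz by (simp add: poly_eq_0_iff_dvd)
  qed
qed

lemma Re_div_unimodular_diff:
  fixes z w :: complex
  assumes "cmod z = 1" "cmod w = 1" "z \<noteq> w"
  shows "Re (w / (z - w)) = - 1 / 2"
proof -
  define u where "u = z * cnj w"
  have ww: "w * cnj w = 1" using assms(2) complex_norm_square[of w] by simp
  have uu: "(Re u)^2 + (Im u)^2 = 1"
    using assms cmod_power2[of u] by (simp add: u_def norm_mult)
  have e: "z - w = w * (u - 1)"
  proof -
    have "w * (u - 1) = z * (w * cnj w) - w" by (simp add: u_def algebra_simps)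
    then show ?thesis using ww by simp
  qed
  have "Re u \<noteq> 1"
  proof
    assume "Re u = 1"
    then have "u = 1" using uu by (simp add: complex_eq_iff)
    then show False using e assms(3) by simp
  qed
  have "w / (z - w) = 1 / (u - 1)" using e ww by auto
  also have "Re (1 / (u - 1)) = (Re u - 1) / ((Re u - 1)^2 + (Im u)^2)"
    by (simp add: Re_divide cmod_power2)
  also have "(Re u - 1)^2 + (Im u)^2 = 2 * (1 - Re u)"
    using uu by (simp add: power2_eq_square algebra_simps)
  also have "(Re u - 1) / (2 * (1 - Re u)) = - 1 / 2"
    using \<open>Re u \<noteq> 1\<close> by (simp add: field_simps)
  finally show ?thesis .
qed

lemma poly_bounded_cball: "\<exists>K>0. \<forall>z. cmod z \<le> 1 \<longrightarrow> cmod (poly p z) \<le> K"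
proof -
  have "bounded (poly p ` cball 0 1)"
    by (intro compact_imp_bounded compact_continuous_image continuous_intros) auto
  then show ?thesis by (auto simp: bounded_pos)
qed

lemma const_dvd_pair:
  fixes r x y :: "'a::{comm_semiring_1,semiring_no_zero_divisors}"
  shows "r dvd x \<Longrightarrow> r dvd y \<Longrightarrow> [:r:] dvd [:x, y:]"
  by (simp add: const_poly_dvd_iff coeff_pCons split: nat.split)

text \<open>Re (\<zeta>0 / (z - \<zeta>0)) = -1/2 on the circle, so a simple pole at \<zeta>0 with residue in
  \<real>\<zeta>0 only shifts the real part by a constant.\<close>

lemma Re_div_sub_unimodular_tendsto:
  fixes F :: "complex \<Rightarrow> complex"
  assumes z01: "cmod \<zeta>0 = 1" and F: "F field_differentiable at \<zeta>0" and F0: "F \<zeta>0 = of_real c * \<zeta>0"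
  shows "((\<lambda>z. Re (F z / (z - \<zeta>0))) \<longlongrightarrow> Re (deriv F \<zeta>0) - c / 2) (at \<zeta>0 within sphere 0 1)"
proof -
  define DQ where "DQ = (\<lambda>z. (F z - F \<zeta>0) / (z - \<zeta>0))"
  have "(DQ \<longlongrightarrow> deriv F \<zeta>0) (at \<zeta>0 within sphere 0 1)"
    using F unfolding DERIV_deriv_iff_field_differentiable[symmetric] has_field_derivative_iff DQ_def
    by (rule tendsto_within_subset) simp
  then have lim: "((\<lambda>z. Re (DQ z) - c / 2) \<longlongrightarrow> Re (deriv F \<zeta>0) - c / 2) (at \<zeta>0 within sphere 0 1)"
    by (intro tendsto_intros)
  have "\<forall>\<^sub>F z in at \<zeta>0 within sphere 0 1. Re (DQ z) - c / 2 = Re (F z / (z - \<zeta>0))"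
    unfolding eventually_at_filter
  proof (intro always_eventually allI impI)
    fix z assume z: "z \<noteq> \<zeta>0" "z \<in> sphere 0 1"
    then have F_split: "F z / (z - \<zeta>0) = DQ z + of_real c * (\<zeta>0 / (z - \<zeta>0))"
      by (simp add: DQ_def F0 diff_divide_distrib)
    have "Re (\<zeta>0 / (z - \<zeta>0)) = - 1 / 2" using z z01 by (intro Re_div_unimodular_diff) auto
    moreover have "Re (of_real c * w) = c * Re w" for w by simp
    ultimately have "Re (of_real c * (\<zeta>0 / (z - \<zeta>0))) = - c / 2" by (simp only:)
    then show "Re (DQ z) - c / 2 = Re (F z / (z - \<zeta>0))"
      by (simp only: F_split plus_complex.sel)
  qed
  then show ?thesis by (rule Lim_transform_eventually[OF lim])
qed

section \<open>Estimates in non-tangential approach regions\<close>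

lemma poly_synthetic_div_remainder:
  fixes p :: "complex poly"
  shows "poly p z = poly p w + (z - w) * poly (synthetic_div p w) z"
proof -
  have "poly ([:-w, 1:] * synthetic_div p w + [:poly p w:]) z = poly p z"
    by (simp only: synthetic_div_correct')
  then show ?thesis by (simp add: algebra_simps)
qed

lemma norm_bilinear_le:
  fixes s t a b :: complex
  shows "cmod (s * a + t * b) \<le> (cmod a + cmod b) * (cmod s + cmod t)"
proof -
  have "cmod (s * a + t * b) \<le> cmod s * cmod a + cmod t * cmod b"
    using norm_triangle_ineq[of "s * a" "t * b"] by (simp add: norm_mult)
  also have "\<dots> \<le> (cmod a + cmod b) * (cmod s + cmod t)"
    by (simp add: algebra_simps add_increasing)
  finally show ?thesis .
qed

lemma quadratic_remainder_bound:
  fixes A B :: "complex poly"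
  shows "\<exists>K. \<forall>z1 z2. cmod z1 \<le> 1 \<longrightarrow>
    cmod ((z1 - \<zeta>) * ((z1 - \<zeta>) * poly A z1 + (z2 - lam) * poly B z1))
      \<le> K * cmod (z1 - \<zeta>) * (cmod (z1 - \<zeta>) + cmod (z2 - lam))"
proof -
  obtain KA KB where KA: "\<forall>z. cmod z \<le> 1 \<longrightarrow> cmod (poly A z) \<le> KA"
    and KB: "\<forall>z. cmod z \<le> 1 \<longrightarrow> cmod (poly B z) \<le> KB"
    using poly_bounded_cball by metis
  have "cmod ((z1 - \<zeta>) * ((z1 - \<zeta>) * poly A z1 + (z2 - lam) * poly B z1))
      \<le> (KA + KB) * cmod (z1 - \<zeta>) * (cmod (z1 - \<zeta>) + cmod (z2 - lam))" if "cmod z1 \<le> 1" for z1 z2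
  proof -
    have "cmod ((z1 - \<zeta>) * poly A z1 + (z2 - lam) * poly B z1)
        \<le> (cmod (poly A z1) + cmod (poly B z1)) * (cmod (z1 - \<zeta>) + cmod (z2 - lam))"
      by (rule norm_bilinear_le)
    also have "\<dots> \<le> (KA + KB) * (cmod (z1 - \<zeta>) + cmod (z2 - lam))"
      using KA KB that by (intro mult_right_mono add_mono) auto
    finally have "cmod (z1 - \<zeta>) * cmod ((z1 - \<zeta>) * poly A z1 + (z2 - lam) * poly B z1)
        \<le> cmod (z1 - \<zeta>) * ((KA + KB) * (cmod (z1 - \<zeta>) + cmod (z2 - lam)))"
      by (rule mult_left_mono) simp
    then show ?thesis by (simp add: norm_mult mult_ac)
  qed
  then show ?thesis by blast
qed

lemma nt_region_Re_bound:
  fixes z w :: complex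
  assumes w1: "cmod w = 1" and C: "C > 0" and h: "cmod (w - z) < C * (1 - cmod z)"
  shows "cmod (z - w) < C * Re (1 - cnj w * z)"
proof -
  have "Re (cnj w * z) \<le> cmod z" using complex_Re_le_cmod[of "cnj w * z"] w1 by (simp add: norm_mult)
  then have "C * (1 - cmod z) \<le> C * Re (1 - cnj w * z)" using C by simp
  then show ?thesis using h by (simp add: norm_minus_commute)
qed

lemma nt_region_linear_lower_bound:
  assumes z1: "cmod \<zeta> = 1" and lam1: "cmod lam = 1" and \<rho>: "\<rho> > 0" and C: "C > 0"
    and w: "(z1, z2) \<in> nt_region (\<zeta>, lam) C"
  shows "min \<rho> 1 * (cmod (z1 - \<zeta>) + cmod (z2 - lam)) / C
    \<le> cmod (of_real \<rho> * (1 - cnj \<zeta> * z1) + (1 - cnj lam * z2))"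
proof -
  have "cmod (z1 - \<zeta>) < C * Re (1 - cnj \<zeta> * z1)"
    by (rule nt_region_Re_bound[OF z1 C]) (use w in \<open>auto simp: nt_region_def\<close>)
  moreover have "cmod (z2 - lam) < C * Re (1 - cnj lam * z2)"
    by (rule nt_region_Re_bound[OF lam1 C]) (use w in \<open>auto simp: nt_region_def\<close>)
  ultimately have "cmod (z1 - \<zeta>) / C \<le> Re (1 - cnj \<zeta> * z1)" "cmod (z2 - lam) / C \<le> Re (1 - cnj lam * z2)"
    using C by (simp_all add: pos_divide_le_eq mult.commute)
  then have "min \<rho> 1 * (cmod (z1 - \<zeta>) / C) \<le> \<rho> * Re (1 - cnj \<zeta> * z1)"
    "min \<rho> 1 * (cmod (z2 - lam) / C) \<le> 1 * Re (1 - cnj lam * z2)"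
    using \<rho> C by (intro mult_mono; simp)+
  then have "min \<rho> 1 * (cmod (z1 - \<zeta>) + cmod (z2 - lam)) / C
      \<le> Re (of_real \<rho> * (1 - cnj \<zeta> * z1) + (1 - cnj lam * z2))"
    by (simp add: add_divide_distrib distrib_left)
  also have "\<dots> \<le> cmod (of_real \<rho> * (1 - cnj \<zeta> * z1) + (1 - cnj lam * z2))"
    by (rule complex_Re_le_cmod)
  finally show ?thesis .
qed

section \<open>Removable discontinuities on the circle\<close>

lemma continuous_on_patch_removable:
  fixes f L :: "complex \<Rightarrow> real"
  assumes fin: "finite D"
    and cont: "\<And>\<zeta>. \<zeta> \<in> S \<Longrightarrow> \<zeta> \<notin> D \<Longrightarrow> continuous (at \<zeta> within S) f"
    and lim: "\<And>\<zeta>. \<zeta> \<in> D \<Longrightarrow> (f \<longlongrightarrow> L \<zeta>) (at \<zeta> within S)"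
  shows "continuous_on S (\<lambda>z. if z \<in> D then L z else f z)"
  unfolding continuous_on_eq_continuous_within
proof
  fix x assume xS: "x \<in> S"
  define g where "g = (\<lambda>z. if z \<in> D then L z else f z)"
  have "open (- (D - {x}))" using fin by (intro open_Compl finite_imp_closed) auto
  then have "\<forall>\<^sub>F z in nhds x. z \<in> - (D - {x})" by (rule eventually_nhds_in_open) simp
  then have ev: "\<forall>\<^sub>F z in at x within S. f z = g z"
    unfolding eventually_at_filter by eventually_elim (auto simp: g_def)
  show "continuous (at x within S) g"
    unfolding continuous_within
  proof (cases "x \<in> D")
    case True
    then show "(g \<longlongrightarrow> g x) (at x within S)"
      using Lim_transform_eventually[OF lim[OF True] ev] by (simp add: g_def)
  next
    case False
    then have "(f \<longlongrightarrow> f x) (at x within S)" using cont[OF xS False] by (simp add: continuous_within)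
    then show "(g \<longlongrightarrow> g x) (at x within S)"
      using Lim_transform_eventually[OF _ ev] False by (simp add: g_def)
  qed
qed

lemma cis_2pi_eq_imp:
  assumes "cis (2 * pi * t) = cis (2 * pi * t0)"
  shows "t \<in> range (\<lambda>k::int. t0 + of_int k)"
proof -
  obtain k :: int where "\<i> * of_real (2 * pi * t) = \<i> * of_real (2 * pi * t0) + of_real (of_int (2 * k) * pi) * \<i>"
    using assms unfolding cis_conv_exp exp_eq by blast
  then have "2 * pi * t = 2 * pi * (t0 + k)"
    by (auto simp: complex_eq_iff algebra_simps)
  then show ?thesis by (auto simp: image_iff)
qed

lemma AE_cis_notin_finite:
  assumes fin: "finite D"
  shows "AE t in lebesgue_on {0..1}. cis (2 * pi * t) \<notin> D"
proof -
  define N where "N = {t. cis (2 * pi * t) \<in> D} \<inter> {0..1::real}"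
  have "countable {t. cis (2 * pi * t) = e}" for e
  proof (cases "\<exists>t0. cis (2 * pi * t0) = e")
    case True
    then obtain t0 where "cis (2 * pi * t0) = e" by blast
    then have "{t. cis (2 * pi * t) = e} \<subseteq> range (\<lambda>k::int. t0 + of_int k)"
      using cis_2pi_eq_imp by auto
    then show ?thesis by (rule countable_subset) simp
  qed simp
  then have "countable (\<Union>e\<in>D. {t. cis (2 * pi * t) = e})" using fin by (simp add: countable_finite)
  moreover have "N \<subseteq> (\<Union>e\<in>D. {t. cis (2 * pi * t) = e})" by (auto simp: N_def)
  ultimately have "countable N" by (rule countable_subset[rotated])
  then have "N \<in> null_sets lebesgue"
    by (rule null_sets_completionI[OF countable_imp_null_set_lborel])
  then have "N \<in> null_sets (lebesgue_on {0..1})"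
    using null_sets_restrict_space[of "{0..1::real}" lebesgue] by (auto simp: N_def)
  then show ?thesis
    by (rule AE_I') (auto simp: N_def space_restrict_space)
qed

lemma removable_discontinuities_circle:
  fixes f :: "complex \<Rightarrow> real"
  defines "D \<equiv> {\<zeta> \<in> sphere 0 1. \<not> continuous (at \<zeta> within sphere 0 1) f}"
  assumes fin: "finite D" and lim: "\<And>\<zeta>. \<zeta> \<in> D \<Longrightarrow> \<exists>L. (f \<longlongrightarrow> L) (at \<zeta> within sphere 0 1)"
  shows "\<exists>g. continuous_on (sphere 0 1) g \<and> bounded (g ` sphere 0 1)
    \<and> (AE t in lebesgue_on {0..1}. f (cis (2 * pi * t)) = g (cis (2 * pi * t)))"
proof -
  define L where "L = (\<lambda>\<zeta>. SOME l. (f \<longlongrightarrow> l) (at \<zeta> within sphere 0 1))"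
  define g where "g = (\<lambda>z. if z \<in> D then L z else f z)"
  have "continuous_on (sphere 0 1) g"
    unfolding g_def
  proof (rule continuous_on_patch_removable[OF fin])
    show "(f \<longlongrightarrow> L \<zeta>) (at \<zeta> within sphere 0 1)" if "\<zeta> \<in> D" for \<zeta>
      using lim[OF that] unfolding L_def by (rule someI_ex)
  qed (auto simp: D_def)
  moreover from this have "bounded (g ` sphere 0 1)"
    by (intro compact_imp_bounded compact_continuous_image) auto
  moreover have "AE t in lebesgue_on {0..1}. f (cis (2 * pi * t)) = g (cis (2 * pi * t))"
    using AE_cis_notin_finite[OF fin] by eventually_elim (simp add: g_def)
  ultimately show ?thesis by blast
qed

section \<open>The stable pair (p1, p2)\<close>

locale stable_pair =
  fixes n :: nat and p1 p2 :: "complex poly"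
  assumes n_pos: "n \<ge> 1"
    and deg1: "degree p1 \<le> n" and deg2: "degree p2 \<le> n"
    and no_zeros: "\<And>z1 z2. norm z1 < 1 \<Longrightarrow> norm z2 < 1 \<Longrightarrow> pev p1 p2 z1 z2 \<noteq> 0"
    and no_common: "coprime [:p1, p2:] [:refl n p2, refl n p1:]"
begin

lemma common_divisor_constant:
  assumes "A dvd [:p1, p2:]" "A dvd [:refl n p2, refl n p1:]"
  obtains c where "A = [:c:]" "is_unit c"
  using coprime_common_divisor[OF no_common assms] is_unit_poly_iff by blast

lemma no_common_root:
  "\<not> (poly p1 z = 0 \<and> poly p2 z = 0 \<and> poly (refl n p1) z = 0 \<and> poly (refl n p2) z = 0)"
proof
  assume "poly p1 z = 0 \<and> poly p2 z = 0 \<and> poly (refl n p1) z = 0 \<and> poly (refl n p2) z = 0"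
  then have "[:[:-z, 1:]:] dvd [:p1, p2:]" "[:[:-z, 1:]:] dvd [:refl n p2, refl n p1:]"
    by (simp_all add: const_dvd_pair poly_eq_0_iff_dvd)
  then obtain c where "[:[:-z, 1:]:] = [:c:]" "is_unit c" by (rule common_divisor_constant)
  then show False by (auto simp: is_unit_poly_iff)
qed

lemma p1_nonzero_disc: "cmod z < 1 \<Longrightarrow> poly p1 z \<noteq> 0"
  using no_zeros[of z 0] by (simp add: pev_def)

lemma p2_le_p1_disc:
  assumes "cmod z < 1" shows "cmod (poly p2 z) \<le> cmod (poly p1 z)"
proof (rule ccontr)
  assume lt: "\<not> ?thesis"
  then have "poly p2 z \<noteq> 0" by auto
  then have "pev p1 p2 z (- poly p1 z / poly p2 z) = 0" by (simp add: pev_def)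
  moreover have "cmod (- poly p1 z / poly p2 z) < 1"
    using lt by (simp add: norm_divide divide_less_eq)
  ultimately show False using no_zeros[OF assms] by blast
qed

lemma p2_le_p1_cball:
  assumes "cmod z \<le> 1" shows "cmod (poly p2 z) \<le> cmod (poly p1 z)"
proof -
  have "closed {z. cmod (poly p2 z) \<le> cmod (poly p1 z)}"
    by (intro closed_Collect_le continuous_intros)
  moreover have "ball 0 1 \<subseteq> {z. cmod (poly p2 z) \<le> cmod (poly p1 z)}"
    using p2_le_p1_disc by auto
  ultimately have "closure (ball (0::complex) 1) \<subseteq> {z. cmod (poly p2 z) \<le> cmod (poly p1 z)}"
    by (rule closure_minimal[rotated])
  then show ?thesis using assms by auto
qed

lemma p1_nonzero_circle:
  assumes z1: "cmod z = 1" shows "poly p1 z \<noteq> 0"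
proof
  assume a0: "poly p1 z = 0"
  then have "poly p2 z = 0" using p2_le_p1_cball[of z] z1 by simp
  then show False
    using a0 no_common_root[of z] by (simp add: poly_refl_unimodular[OF deg1 z1] poly_refl_unimodular[OF deg2 z1])
qed

lemma p1_nonzero_cball: "cmod z \<le> 1 \<Longrightarrow> poly p1 z \<noteq> 0"
  using p1_nonzero_disc p1_nonzero_circle by (cases "cmod z < 1") auto

text \<open>Maximum modulus principle for refl p2 / p1, whose modulus on the circle is |p2 / p1|.\<close>

lemma refl_p2_le_p1_cball:
  assumes "cmod z \<le> 1" shows "cmod (poly (refl n p2) z) \<le> cmod (poly p1 z)"
proof -
  define f where "f = (\<lambda>z. poly (refl n p2) z / poly p1 z)"
  have "f holomorphic_on ball 0 1" "continuous_on (cball 0 1) f"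
    unfolding f_def using p1_nonzero_cball by (auto intro!: holomorphic_intros continuous_intros)
  moreover have fr: "cmod (f w) \<le> 1" if "w \<in> sphere 0 1" for w
    using that p2_le_p1_cball[of w] p1_nonzero_circle[of w] norm_poly_refl_unimodular[OF deg2, of w]
    by (simp add: f_def norm_divide divide_le_eq)
  ultimately have "cmod (f z) \<le> 1"
    using maximum_modulus_frontier[of f "ball 0 1"] fr assms by (cases "cmod z < 1") auto
  then show ?thesis using p1_nonzero_cball[OF assms] by (simp add: f_def norm_divide divide_le_eq)
qed

text \<open>The reflection of denom_refl x is the denominator refl p1 - x p2 of W x.\<close>

definition denom_refl :: "complex \<Rightarrow> complex poly" where
  "denom_refl x = p1 - smult (cnj x) (refl n p2)"

lemma degree_denom_refl: "degree (denom_refl x) \<le> n"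
  unfolding denom_refl_def using deg1 degree_refl[of n p2]
  by (meson degree_diff_le degree_smult_le order_trans)

lemma refl_denom_refl: "refl n (denom_refl x) = refl n p1 - smult x p2"
  by (simp add: denom_refl_def refl_diff refl_smult refl_refl[OF deg2])

lemma poly_refl_denom_refl_circle:
  assumes "cmod z = 1"
  shows "poly (refl n p1) z - x * poly p2 z = z ^ n * cnj (poly (denom_refl x) z)"
  using poly_refl_unimodular[OF degree_denom_refl assms, of x] by (simp add: refl_denom_refl)

lemma norm_denominator_circle:
  "cmod z = 1 \<Longrightarrow> cmod (poly (refl n p1) z - x * poly p2 z) = cmod (poly (denom_refl x) z)"
  by (simp add: poly_refl_denom_refl_circle norm_mult norm_power)

lemma denominator_zero_iff:
  "cmod z = 1 \<Longrightarrow> poly (refl n p1) z = x * poly p2 z \<longleftrightarrow> poly (denom_refl x) z = 0"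
  using norm_denominator_circle[of z x] by auto

lemma W_eq_Re_cayley:
  assumes z1: "cmod z = 1" and x1: "cmod x = 1"
  shows "Wfun n p1 p2 x z = Re ((poly p1 z + cnj x * poly (refl n p2) z) / poly (denom_refl x) z)"
proof -
  define a v where "a = poly p1 z" and "v = cnj x * poly (refl n p2) z"
  have "cmod (poly p2 z) = cmod v"
    using norm_poly_refl_unimodular[OF deg2 z1] x1 by (simp add: v_def norm_mult)
  moreover have "poly (denom_refl x) z = a - v" by (simp add: denom_refl_def a_def v_def)
  ultimately have "Wfun n p1 p2 x z = ((cmod a)^2 - (cmod v)^2) / (cmod (a - v))^2"
    by (simp add: Wfun_def norm_denominator_circle[OF z1] a_def)
  also have "(cmod a)^2 - (cmod v)^2 = Re ((a + v) * cnj (a - v))"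
    by (simp only: cmod_power2) (simp add: algebra_simps power2_eq_square)
  also have "Re ((a + v) * cnj (a - v)) / (cmod (a - v))^2 = Re ((a + v) / (a - v))"
    by (simp add: Re_divide cmod_power2 algebra_simps)
  finally show ?thesis by (simp add: \<open>poly (denom_refl x) z = a - v\<close> a_def v_def)
qed

lemma denom_refl_boundary_factor:
  assumes x1: "cmod x = 1" and z1: "cmod \<zeta> = 1" and h: "denom_refl x = [:-\<zeta>, 1:] * h"
  shows "\<exists>s::real. poly h \<zeta> = of_real s * poly p1 \<zeta> * cnj \<zeta>"
    and "denom_refl x \<noteq> 0 \<Longrightarrow> poly h \<zeta> \<noteq> 0"
proof -
  have le: "cmod (poly (smult (cnj x) (refl n p2)) z) \<le> cmod (poly p1 z)" if "cmod z \<le> 1" for z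
    using refl_p2_le_p1_cball[OF that] x1 by (simp add: norm_mult)
  have fac: "p1 - smult (cnj x) (refl n p2) = [:-\<zeta>, 1:] * h" using h by (simp add: denom_refl_def)
  define s where "s = Re (\<zeta> * (poly h \<zeta> / poly p1 \<zeta>))"
  have "\<zeta> * (poly h \<zeta> / poly p1 \<zeta>) = of_real s"
    using schur_boundary_zero(1)[OF z1 le p1_nonzero_cball fac] by (simp add: s_def complex_eq_iff)
  then have "\<zeta> * poly h \<zeta> = of_real s * poly p1 \<zeta>"
    using p1_nonzero_circle[OF z1] by (simp add: field_simps)
  moreover have "\<zeta> \<noteq> 0" using z1 by auto
  ultimately have "poly h \<zeta> = of_real s * poly p1 \<zeta> * cnj \<zeta>"
    using z1 by (simp add: cnj_eq_inverse_unimodular field_simps)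
  then show "\<exists>s::real. poly h \<zeta> = of_real s * poly p1 \<zeta> * cnj \<zeta>" by blast
  show "poly h \<zeta> \<noteq> 0" if "denom_refl x \<noteq> 0"
    using schur_boundary_zero(3)[OF z1 le p1_nonzero_cball fac] that by (auto simp: denom_refl_def)
qed

lemma W_tendsto_at_boundary_zero:
  assumes x1: "cmod x = 1" and z01: "cmod \<zeta>0 = 1"
    and q0: "poly (denom_refl x) \<zeta>0 = 0" and qn: "denom_refl x \<noteq> 0"
  shows "\<exists>L. (Wfun n p1 p2 x \<longlongrightarrow> L) (at \<zeta>0 within sphere 0 1)"
proof -
  obtain h where h: "denom_refl x = [:-\<zeta>0, 1:] * h"
    using q0 by (auto simp: poly_eq_0_iff_dvd elim!: dvdE)
  obtain s :: real where hs: "poly h \<zeta>0 = of_real s * poly p1 \<zeta>0 * cnj \<zeta>0"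
    using denom_refl_boundary_factor(1)[OF x1 z01 h] by blast
  have hz: "poly h \<zeta>0 \<noteq> 0" by (rule denom_refl_boundary_factor(2)[OF x1 z01 h qn])
  have az: "poly p1 \<zeta>0 \<noteq> 0" using p1_nonzero_circle[OF z01] .
  have s0: "s \<noteq> 0" using hs hz by auto
  define F where "F = (\<lambda>z. (poly p1 z + cnj x * poly (refl n p2) z) / poly h z)"
  have "open {z. poly h z \<noteq> 0}" by (intro open_Collect_neq continuous_intros)
  moreover have "F holomorphic_on {z. poly h z \<noteq> 0}"
    unfolding F_def by (intro holomorphic_intros) auto
  ultimately have "F field_differentiable at \<zeta>0"
    using holomorphic_on_imp_differentiable_at hz by blast
  moreover have "F \<zeta>0 = of_real (2 / s) * \<zeta>0"
  proof -
    have "cnj x * poly (refl n p2) \<zeta>0 = poly p1 \<zeta>0" using q0 by (simp add: denom_refl_def)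
    then show ?thesis using az z01 s0 by (auto simp: F_def hs cnj_eq_inverse_unimodular field_simps)
  qed
  ultimately have lim: "((\<lambda>z. Re (F z / (z - \<zeta>0))) \<longlongrightarrow> Re (deriv F \<zeta>0) - 2 / s / 2)
      (at \<zeta>0 within sphere 0 1)"
    by (rule Re_div_sub_unimodular_tendsto[OF z01])
  have "(poly h \<longlongrightarrow> poly h \<zeta>0) (at \<zeta>0 within sphere 0 1)"
    by (intro tendsto_intros)
  then have "\<forall>\<^sub>F z in at \<zeta>0 within sphere 0 1. poly h z \<noteq> 0"
    using hz tendsto_imp_eventually_ne by blast
  then have "\<forall>\<^sub>F z in at \<zeta>0 within sphere 0 1. Re (F z / (z - \<zeta>0)) = Wfun n p1 p2 x z"
    unfolding eventually_at_filter
  proof eventually_elim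
    case (elim z)
    show ?case
    proof (intro impI)
      assume z: "z \<noteq> \<zeta>0" "z \<in> sphere 0 1"
      have Qz: "poly (denom_refl x) z = (z - \<zeta>0) * poly h z" by (simp add: h algebra_simps)
      then show "Re (F z / (z - \<zeta>0)) = Wfun n p1 p2 x z"
        using z elim by (simp add: W_eq_Re_cayley x1 Qz F_def mult.commute)
    qed
  qed
  then show ?thesis using Lim_transform_eventually[OF lim] by blast
qed

lemma refl_p2_eq_at_denominator_zero:
  assumes x1: "cmod x = 1" and z1: "cmod \<zeta> = 1"
    and E0: "poly (refl n p1) \<zeta> = x * poly p2 \<zeta>"
  shows "poly (refl n p2) \<zeta> = x * poly p1 \<zeta>"
proof -
  have "poly p1 \<zeta> = cnj x * poly (refl n p2) \<zeta>"
    using denominator_zero_iff[OF z1, of x] E0 by (simp add: denom_refl_def)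
  moreover have "x * cnj x = 1" using x1 complex_norm_square[of x] by simp
  ultimately show ?thesis by (metis mult.assoc mult_1)
qed

lemma degree_denom_refl_factor:
  assumes "denom_refl x = [:-\<zeta>, 1:] * q"
  shows "degree q \<le> n - 1"
proof (cases "q = 0")
  case False
  then have "degree (denom_refl x) = degree [:-\<zeta>, 1:] + degree q"
    unfolding assms by (intro degree_mult_eq) auto
  then show ?thesis using degree_denom_refl[of x] by simp
qed simp

lemma denominator_linear_factor:
  assumes z1: "cmod \<zeta> = 1" and q: "denom_refl x = [:-\<zeta>, 1:] * q"
  shows "poly (refl n p1) z - x * poly p2 z = (z - \<zeta>) * (- cnj \<zeta> * poly (refl (n - 1) q) z)"
proof -
  have "refl n p1 - smult x p2 = [:1, - cnj \<zeta>:] * refl (n - 1) q"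
    unfolding refl_denom_refl[symmetric] q
    by (rule refl_linear_factor[OF degree_denom_refl_factor[OF q] n_pos])
  from arg_cong[OF this, of "\<lambda>r. poly r z"]
  have "poly (refl n p1) z - x * poly p2 z = (1 - cnj \<zeta> * z) * poly (refl (n - 1) q) z"
    by (simp add: algebra_simps)
  moreover have "cnj \<zeta> * \<zeta> = 1" using z1 complex_norm_square[of \<zeta>] by (simp add: mult.commute)
  ultimately show ?thesis by (simp add: algebra_simps)
qed

lemma refl_p2_linear_factor:
  assumes x1: "cmod x = 1" and q: "denom_refl x = [:-\<zeta>, 1:] * q"
  shows "poly (refl n p2) z - x * poly p1 z = (z - \<zeta>) * (- x * poly q z)"
proof -
  have h: "(z - \<zeta>) * poly q z = poly p1 z - cnj x * poly (refl n p2) z"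
    using arg_cong[OF q, of "\<lambda>r. poly r z"] by (simp add: denom_refl_def algebra_simps)
  have "(z - \<zeta>) * (- x * poly q z) = - x * ((z - \<zeta>) * poly q z)" by simp
  also have "\<dots> = - x * (poly p1 z - cnj x * poly (refl n p2) z)" by (simp only: h)
  also have "\<dots> = (x * cnj x) * poly (refl n p2) z - x * poly p1 z" by (simp add: algebra_simps)
  also have "x * cnj x = 1" using x1 complex_norm_square[of x] by simp
  finally show ?thesis by simp
qed

lemma numerator_factor:
  assumes x1: "cmod x = 1" and z1: "cmod \<zeta> = 1"
    and E0: "poly (refl n p1) \<zeta> = x * poly p2 \<zeta>"
    and lam: "poly p1 \<zeta> + lam * poly p2 \<zeta> = 0"
  shows "\<exists>A B. \<forall>z1 z2. ptev n p1 p2 z1 z2 - x * pev p1 p2 z1 z2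
     = (z1 - \<zeta>) * ((z1 - \<zeta>) * poly A z1 + (z2 - lam) * poly B z1)"
proof -
  obtain q where q: "denom_refl x = [:-\<zeta>, 1:] * q"
    using denominator_zero_iff[OF z1, of x] E0 by (auto simp: poly_eq_0_iff_dvd elim!: dvdE)
  define qt where "qt = refl (n - 1) q"
  note E = denominator_linear_factor[OF z1 q, folded qt_def]
  note D = refl_p2_linear_factor[OF x1 q]
  obtain s :: real where qs: "poly q \<zeta> = of_real s * poly p1 \<zeta> * cnj \<zeta>"
    using denom_refl_boundary_factor(1)[OF x1 z1 q] by blast
  have qtz: "poly qt \<zeta> = \<zeta>^(n - 1) * cnj (poly q \<zeta>)"
    unfolding qt_def by (rule poly_refl_unimodular[OF degree_denom_refl_factor[OF q] z1])
  have zz: "cnj \<zeta> * \<zeta> = 1" using z1 complex_norm_square[of \<zeta>] by (simp add: mult.commute)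
  define M where "M = smult (- cnj \<zeta> * lam) qt - smult x q"
  \<comment> \<open>M vanishes at \<zeta> because s in qs is real.\<close>
  have "poly M \<zeta> = - of_real s * cnj \<zeta> * (lam * (\<zeta> * \<zeta>^(n - 1) * cnj (poly p1 \<zeta>)) + x * poly p1 \<zeta>)"
    using zz by (simp add: M_def qtz qs algebra_simps)
  also have "\<zeta> * \<zeta>^(n - 1) = \<zeta>^n" using n_pos by (simp flip: power_Suc)
  also have "\<zeta>^n * cnj (poly p1 \<zeta>) = x * poly p2 \<zeta>"
    using E0 poly_refl_unimodular[OF deg1 z1] by simp
  finally have "poly M \<zeta> = - of_real s * cnj \<zeta> * x * (poly p1 \<zeta> + lam * poly p2 \<zeta>)"
    by (simp add: algebra_simps)
  then have "poly M \<zeta> = 0" using lam by simp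
  then obtain A where A: "M = [:-\<zeta>, 1:] * A" by (auto simp: poly_eq_0_iff_dvd elim!: dvdE)
  have "ptev n p1 p2 z1 z2 - x * pev p1 p2 z1 z2
     = (z1 - \<zeta>) * ((z1 - \<zeta>) * poly A z1 + (z2 - lam) * poly (smult (- cnj \<zeta>) qt) z1)" for z1 z2
  proof -
    have "ptev n p1 p2 z1 z2 - x * pev p1 p2 z1 z2
        = z2 * (poly (refl n p1) z1 - x * poly p2 z1) + (poly (refl n p2) z1 - x * poly p1 z1)"
      by (simp add: ptev_def pev_def algebra_simps)
    also have "\<dots> = (z1 - \<zeta>) * (poly M z1 + (z2 - lam) * (- cnj \<zeta> * poly qt z1))"
      by (simp add: E D M_def algebra_simps)
    also have "poly M z1 = (z1 - \<zeta>) * poly A z1" by (simp add: A algebra_simps)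
    finally show ?thesis by simp
  qed
  then show ?thesis by blast
qed

lemma p1_add_smult_p2_nonzero:
  assumes lam1: "cmod lam = 1"
  shows "p1 + smult lam p2 \<noteq> 0"
proof
  assume "p1 + smult lam p2 = 0"
  then have p1e: "p1 = smult (- lam) p2" by (simp add: eq_neg_iff_add_eq_0[symmetric])
  have ll: "lam * cnj lam = 1" using lam1 complex_norm_square[of lam] by simp
  define A :: "complex poly poly" where "A = [:[:-lam:], 1:]"
  have "[:p1, p2:] = [:p2:] * A"
    by (simp add: A_def p1e mult_pCons_right mult.commute)
  moreover have "refl n p1 = smult (- cnj lam) (refl n p2)"
    unfolding p1e refl_smult by simp
  then have "[:refl n p2, refl n p1:] = [:refl n p1:] * A"
    using ll by (simp add: A_def mult_pCons_right mult.commute)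
  ultimately obtain c where "A = [:c:]"
    by (metis common_divisor_constant dvd_triv_right)
  then show False by (simp add: A_def)
qed

lemma p1_add_smult_p2_boundary_factor:
  assumes z1: "cmod \<zeta> = 1" and lam1: "cmod lam = 1"
    and lam: "poly p1 \<zeta> + lam * poly p2 \<zeta> = 0"
  obtains \<rho> r where "\<rho> > 0" "p1 + smult lam p2 = [:-\<zeta>, 1:] * r"
    "poly r \<zeta> = of_real \<rho> * lam * poly p2 \<zeta> * cnj \<zeta>"
proof -
  have az: "poly p1 \<zeta> \<noteq> 0" using p1_nonzero_circle[OF z1] .
  have "poly (p1 + smult lam p2) \<zeta> = 0" using lam by simp
  then have "[:-\<zeta>, 1:] dvd p1 + smult lam p2" by (simp only: poly_eq_0_iff_dvd)
  then obtain r where r: "p1 + smult lam p2 = [:-\<zeta>, 1:] * r" by (rule dvdE)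
  have le: "cmod (poly (smult (- lam) p2) z) \<le> cmod (poly p1 z)" if "cmod z \<le> 1" for z
    using p2_le_p1_cball[OF that] lam1 by (simp add: norm_mult)
  have fac: "p1 - smult (- lam) p2 = [:-\<zeta>, 1:] * r" using r by simp
  have ne: "p1 \<noteq> smult (- lam) p2" using p1_add_smult_p2_nonzero[OF lam1] by auto
  note schur = schur_boundary_zero[OF z1 le p1_nonzero_cball fac]
  define \<rho> where "\<rho> = - Re (\<zeta> * (poly r \<zeta> / poly p1 \<zeta>))"
  have rho_eq: "\<zeta> * (poly r \<zeta> / poly p1 \<zeta>) = - of_real \<rho>"
    using schur(1) by (simp add: \<rho>_def complex_eq_iff)
  have "poly r \<zeta> \<noteq> 0" using schur(3) ne by blast
  then have "\<rho> \<noteq> 0" using rho_eq az z1 by auto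
  then have "\<rho> > 0" using schur(2) by (simp add: \<rho>_def)
  moreover have "poly r \<zeta> = of_real \<rho> * lam * poly p2 \<zeta> * cnj \<zeta>"
  proof -
    have "poly r \<zeta> = cnj \<zeta> * (\<zeta> * (poly r \<zeta> / poly p1 \<zeta>)) * poly p1 \<zeta>"
      using az z1 complex_norm_square[of \<zeta>] by (simp add: field_simps)
    also have "\<dots> = cnj \<zeta> * (- of_real \<rho>) * poly p1 \<zeta>" by (simp only: rho_eq)
    also have "poly p1 \<zeta> = - lam * poly p2 \<zeta>" using lam by (simp add: eq_neg_iff_add_eq_0)
    finally show ?thesis by (simp add: mult_ac)
  qed
  ultimately show ?thesis using that r by blast
qed

lemma pev_factor:
  assumes z1: "cmod \<zeta> = 1" and lam1: "cmod lam = 1"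
    and lam: "poly p1 \<zeta> + lam * poly p2 \<zeta> = 0"
  shows "\<exists>\<rho>>0. \<exists>A B. \<forall>z1 z2. pev p1 p2 z1 z2 =
     - poly p2 \<zeta> * lam * (of_real \<rho> * (1 - cnj \<zeta> * z1) + (1 - cnj lam * z2))
     + (z1 - \<zeta>) * ((z1 - \<zeta>) * poly A z1 + (z2 - lam) * poly B z1)"
proof -
  obtain \<rho> r where rho_pos: "\<rho> > 0" and r: "p1 + smult lam p2 = [:-\<zeta>, 1:] * r"
    and rz: "poly r \<zeta> = of_real \<rho> * lam * poly p2 \<zeta> * cnj \<zeta>"
    using p1_add_smult_p2_boundary_factor[OF z1 lam1 lam] by blast
  have zz: "\<zeta> * cnj \<zeta> = 1" using z1 complex_norm_square[of \<zeta>] by simp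
  have ll: "lam * cnj lam = 1" using lam1 complex_norm_square[of lam] by simp
  define A B where "A = synthetic_div r \<zeta>" and "B = synthetic_div p2 \<zeta>"
  have "pev p1 p2 z1 z2 =
     - poly p2 \<zeta> * lam * (of_real \<rho> * (1 - cnj \<zeta> * z1) + (1 - cnj lam * z2))
     + (z1 - \<zeta>) * ((z1 - \<zeta>) * poly A z1 + (z2 - lam) * poly B z1)" for z1 z2
  proof -
    have "pev p1 p2 z1 z2 = (z1 - \<zeta>) * poly r z1 + (z2 - lam) * poly p2 z1"
      using arg_cong[OF r, of "\<lambda>q. poly q z1"] by (simp add: pev_def algebra_simps)
    also have "\<dots> = ((z1 - \<zeta>) * poly r \<zeta> + (z2 - lam) * poly p2 \<zeta>)
        + (z1 - \<zeta>) * ((z1 - \<zeta>) * poly A z1 + (z2 - lam) * poly B z1)"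
      unfolding A_def B_def
      by (subst (1 2) poly_synthetic_div_remainder[where w = \<zeta>]) (simp add: algebra_simps)
    also have "(z1 - \<zeta>) * poly r \<zeta> + (z2 - lam) * poly p2 \<zeta>
        = poly p2 \<zeta> * (of_real \<rho> * lam * (cnj \<zeta> * z1 - \<zeta> * cnj \<zeta>) + (lam * cnj lam * z2 - lam))"
      using ll by (simp add: rz algebra_simps)
    also have "\<dots> = - poly p2 \<zeta> * lam * (of_real \<rho> * (1 - cnj \<zeta> * z1) + (1 - cnj lam * z2))"
      using zz ll by (simp add: algebra_simps)
    finally show ?thesis .
  qed
  then show ?thesis using rho_pos by blast
qed

lemma pev_lower_bound_nt:
  assumes z1: "cmod \<zeta> = 1" and lam1: "cmod lam = 1"
    and lam: "poly p1 \<zeta> + lam * poly p2 \<zeta> = 0" and C: "C > 0"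
  shows "\<exists>\<kappa>>0. \<forall>\<^sub>F w in at (\<zeta>, lam) within nt_region (\<zeta>, lam) C.
    \<kappa> * (cmod (fst w - \<zeta>) + cmod (snd w - lam)) \<le> cmod (pev p1 p2 (fst w) (snd w))"
proof -
  obtain \<rho> A B where \<rho>: "\<rho> > 0" and fac: "\<And>z1 z2. pev p1 p2 z1 z2 =
     - poly p2 \<zeta> * lam * (of_real \<rho> * (1 - cnj \<zeta> * z1) + (1 - cnj lam * z2))
     + (z1 - \<zeta>) * ((z1 - \<zeta>) * poly A z1 + (z2 - lam) * poly B z1)"
    using pev_factor[OF z1 lam1 lam] by blast
  obtain K where K: "\<And>z1 z2. cmod z1 \<le> 1 \<Longrightarrow>
      cmod ((z1 - \<zeta>) * ((z1 - \<zeta>) * poly A z1 + (z2 - lam) * poly B z1))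
        \<le> K * cmod (z1 - \<zeta>) * (cmod (z1 - \<zeta>) + cmod (z2 - lam))"
    using quadratic_remainder_bound by blast
  have "poly p2 \<zeta> \<noteq> 0" using lam p1_nonzero_circle[OF z1] by auto
  define \<kappa> where "\<kappa> = cmod (poly p2 \<zeta>) * min \<rho> 1 / C"
  have \<kappa>: "\<kappa> > 0" using \<open>poly p2 \<zeta> \<noteq> 0\<close> \<rho> C by (simp add: \<kappa>_def)
  have "((\<lambda>w. K * cmod (fst w - \<zeta>)) \<longlongrightarrow> 0) (at (\<zeta>, lam) within nt_region (\<zeta>, lam) C)"
    by (intro tendsto_eq_intros) auto
  then have "\<forall>\<^sub>F w in at (\<zeta>, lam) within nt_region (\<zeta>, lam) C. K * cmod (fst w - \<zeta>) < \<kappa> / 2"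
    by (rule order_tendstoD) (use \<kappa> in simp)
  moreover have "\<forall>\<^sub>F w in at (\<zeta>, lam) within nt_region (\<zeta>, lam) C. w \<in> nt_region (\<zeta>, lam) C"
    by (simp add: eventually_at_filter)
  ultimately have "\<forall>\<^sub>F w in at (\<zeta>, lam) within nt_region (\<zeta>, lam) C.
    \<kappa> / 2 * (cmod (fst w - \<zeta>) + cmod (snd w - lam)) \<le> cmod (pev p1 p2 (fst w) (snd w))"
  proof eventually_elim
    case (elim w)
    obtain z1 z2 where w: "w = (z1, z2)" by (cases w)
    define u v where "u = cmod (z1 - \<zeta>)" and "v = cmod (z2 - lam)"
    have "cmod z1 < 1" using elim by (simp add: w nt_region_def)
    define L R where
      "L = - poly p2 \<zeta> * lam * (of_real \<rho> * (1 - cnj \<zeta> * z1) + (1 - cnj lam * z2))" and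
      "R = (z1 - \<zeta>) * ((z1 - \<zeta>) * poly A z1 + (z2 - lam) * poly B z1)"
    have "\<kappa> * (u + v) = cmod (poly p2 \<zeta>) * (min \<rho> 1 * (u + v) / C)" by (simp add: \<kappa>_def)
    also have "\<dots> \<le> cmod (poly p2 \<zeta>) * cmod (of_real \<rho> * (1 - cnj \<zeta> * z1) + (1 - cnj lam * z2))"
      using nt_region_linear_lower_bound[OF z1 lam1 \<rho> C, of z1 z2] elim
      by (intro mult_left_mono) (simp_all add: w u_def v_def)
    also have "\<dots> = cmod L" using lam1 by (simp add: L_def norm_mult)
    finally have "\<kappa> * (u + v) \<le> cmod L" .
    moreover have "cmod R \<le> K * u * (u + v)"
      using K[of z1 z2] \<open>cmod z1 < 1\<close> by (simp add: R_def u_def v_def)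
    moreover have "cmod L - cmod R \<le> cmod (pev p1 p2 z1 z2)"
      unfolding fac L_def R_def by (rule norm_diff_ineq)
    ultimately have "\<kappa> * (u + v) - K * u * (u + v) \<le> cmod (pev p1 p2 z1 z2)"
      by linarith
    moreover have "K * u * (u + v) \<le> \<kappa> / 2 * (u + v)"
      using elim by (intro mult_right_mono) (auto simp: w u_def v_def)
    ultimately show ?case by (simp add: w u_def v_def)
  qed
  then show ?thesis using \<kappa> by (intro exI[of _ "\<kappa> / 2"]) simp
qed

lemma rif_nt_tendsto:
  assumes x1: "cmod x = 1" and z1: "cmod \<zeta> = 1" and lam1: "cmod lam = 1"
    and lam: "poly p1 \<zeta> + lam * poly p2 \<zeta> = 0"
    and E0: "poly (refl n p1) \<zeta> = x * poly p2 \<zeta>"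
    and C: "C > 0"
  shows "(rif n p1 p2 \<longlongrightarrow> x) (at (\<zeta>, lam) within nt_region (\<zeta>, lam) C)"
proof -
  obtain A B where num: "\<And>z1 z2. ptev n p1 p2 z1 z2 - x * pev p1 p2 z1 z2
     = (z1 - \<zeta>) * ((z1 - \<zeta>) * poly A z1 + (z2 - lam) * poly B z1)"
    using numerator_factor[OF x1 z1 E0 lam] by blast
  obtain K where K: "\<And>z1 z2. cmod z1 \<le> 1 \<Longrightarrow>
      cmod ((z1 - \<zeta>) * ((z1 - \<zeta>) * poly A z1 + (z2 - lam) * poly B z1))
        \<le> K * cmod (z1 - \<zeta>) * (cmod (z1 - \<zeta>) + cmod (z2 - lam))"
    using quadratic_remainder_bound by blast
  obtain \<kappa> where \<kappa>: "\<kappa> > 0" and den: "\<forall>\<^sub>F w in at (\<zeta>, lam) within nt_region (\<zeta>, lam) C.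
      \<kappa> * (cmod (fst w - \<zeta>) + cmod (snd w - lam)) \<le> cmod (pev p1 p2 (fst w) (snd w))"
    using pev_lower_bound_nt[OF z1 lam1 lam C] by blast
  have "\<forall>\<^sub>F w in at (\<zeta>, lam) within nt_region (\<zeta>, lam) C. w \<in> nt_region (\<zeta>, lam) C"
    by (simp add: eventually_at_filter)
  then have "\<forall>\<^sub>F w in at (\<zeta>, lam) within nt_region (\<zeta>, lam) C.
      norm (rif n p1 p2 w - x) \<le> K / \<kappa> * cmod (fst w - \<zeta>)"
    using den
  proof eventually_elim
    case (elim w)
    obtain z1 z2 where w: "w = (z1, z2)" by (cases w)
    define u v where "u = cmod (z1 - \<zeta>)" and "v = cmod (z2 - lam)"
    have "cmod z1 < 1" using elim by (simp add: w nt_region_def)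
    then have "u > 0" using z1 by (auto simp: u_def)
    then have uv: "\<kappa> * (u + v) > 0" using \<kappa> by (simp add: v_def add_pos_nonneg)
    have "pev p1 p2 z1 z2 \<noteq> 0" using elim uv by (auto simp: w u_def v_def)
    then have "rif n p1 p2 w - x = (ptev n p1 p2 z1 z2 - x * pev p1 p2 z1 z2) / pev p1 p2 z1 z2"
      by (simp add: w rif_def field_simps)
    then have "norm (rif n p1 p2 w - x) = cmod (ptev n p1 p2 z1 z2 - x * pev p1 p2 z1 z2) / cmod (pev p1 p2 z1 z2)"
      by (simp add: norm_divide)
    also have "\<dots> \<le> K * u * (u + v) / (\<kappa> * (u + v))"
    proof -
      have numb: "cmod (ptev n p1 p2 z1 z2 - x * pev p1 p2 z1 z2) \<le> K * u * (u + v)"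
        using K[of z1 z2] \<open>cmod z1 < 1\<close> by (simp add: num u_def v_def)
      have "\<kappa> * (u + v) \<le> cmod (pev p1 p2 z1 z2)" using elim by (simp add: w u_def v_def)
      then show ?thesis by (rule frac_le[OF order_trans[OF norm_ge_zero numb] numb uv])
    qed
    also have "\<dots> = K * u / \<kappa>"
      using uv by (intro nonzero_mult_divide_mult_cancel_right) auto
    finally show ?case by (simp add: w u_def mult.commute)
  qed
  moreover have "((\<lambda>w. K / \<kappa> * cmod (fst w - \<zeta>)) \<longlongrightarrow> 0) (at (\<zeta>, lam) within nt_region (\<zeta>, lam) C)"
    by (intro tendsto_eq_intros) auto
  ultimately show ?thesis by (rule LIM_zero_cancel[OF Lim_null_comparison])
qed

lemma exc_pts_if_denominator_zero:
  assumes x1: "cmod x = 1" and z1: "cmod \<zeta> = 1"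
    and E0: "poly (refl n p1) \<zeta> = x * poly p2 \<zeta>"
  shows "(x, \<zeta>) \<in> exc_pts n p1 p2"
proof -
  have az: "poly p1 \<zeta> \<noteq> 0" using p1_nonzero_circle[OF z1] .
  have ab: "cmod (poly p2 \<zeta>) = cmod (poly p1 \<zeta>)"
    using E0 x1 norm_poly_refl_unimodular[OF deg1 z1] by (simp add: norm_mult)
  then have bz: "poly p2 \<zeta> \<noteq> 0" using az by auto
  define lam where "lam = - poly p1 \<zeta> / poly p2 \<zeta>"
  have lam1: "cmod lam = 1" using ab bz az by (simp add: lam_def norm_divide)
  have lam: "poly p1 \<zeta> + lam * poly p2 \<zeta> = 0" using bz by (simp add: lam_def)
  have "nt_limit (rif n p1 p2) (\<zeta>, lam) x"
    unfolding nt_limit_def using rif_nt_tendsto[OF x1 z1 lam1 lam E0] by simp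
  moreover have "\<forall>\<mu>\<in>sphere 0 1. ptev n p1 p2 \<zeta> \<mu> = x * pev p1 p2 \<zeta> \<mu>"
    using refl_p2_eq_at_denominator_zero[OF x1 z1 E0]
    by (simp add: ptev_def pev_def E0 algebra_simps)
  moreover have "pev p1 p2 \<zeta> lam = 0" using lam by (simp add: pev_def mult.commute)
  ultimately show ?thesis unfolding exc_pts_def using z1 lam1 by auto
qed

lemma p1_refl_p1_ne_p2_refl_p2: "p1 * refl n p1 \<noteq> p2 * refl n p2"
proof
  assume eq: "p1 * refl n p1 = p2 * refl n p2"
  define g where "g = gcd p1 p2"
  have p1: "p1 \<noteq> 0" using p1_nonzero_disc[of 0] by auto
  then have "g \<noteq> 0" by (simp add: g_def)
  then obtain a b where ab: "p1 = a * g" "p2 = b * g" "coprime a b"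
    using gcd_coprime_exists[of p1 p2] unfolding g_def by blast
  have "a \<noteq> 0" using ab(1) p1 by auto
  have "(a * refl n p1) * g = (a * g) * refl n p1" by (simp add: mult_ac)
  also have "\<dots> = p2 * refl n p2" by (simp only: ab(1)[symmetric] eq)
  also have "\<dots> = (b * g) * refl n p2" by (simp only: ab(2)[symmetric])
  also have "\<dots> = (b * refl n p2) * g" by (simp add: mult_ac)
  finally have eq': "a * refl n p1 = b * refl n p2" using \<open>g \<noteq> 0\<close> by simp
  then have "a dvd b * refl n p2" by (metis dvd_triv_left)
  then have "a dvd refl n p2" using ab(3) coprime_dvd_mult_right_iff by blast
  then obtain h where h: "refl n p2 = a * h" by (rule dvdE)
  then have h': "refl n p1 = b * h" using eq' \<open>a \<noteq> 0\<close> by (simp add: mult.left_commute)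
  have "[:p1, p2:] = [:g:] * [:a, b:]"
    by (simp add: mult.commute flip: ab(1,2))
  moreover have "[:refl n p2, refl n p1:] = [:h:] * [:a, b:]"
    by (simp add: mult.commute flip: h h')
  ultimately obtain c where "[:a, b:] = [:c:]" by (metis common_divisor_constant dvd_triv_right)
  then have "p2 = 0" by (simp add: ab(2))
  then have "refl n p1 = 0" using eq p1 by simp
  then show False using p1 refl_eq_0_iff[OF deg1] by simp
qed

lemma finite_exc_pts: "finite (exc_pts n p1 p2)"
proof -
  define Z where "Z = {\<tau>. poly (p1 * refl n p1 - p2 * refl n p2) \<tau> = 0}"
  have "finite Z" unfolding Z_def
    by (rule poly_roots_finite) (use p1_refl_p1_ne_p2_refl_p2 in simp)
  define f where "f = (\<lambda>\<tau> \<mu>. ptev n p1 p2 \<tau> \<mu> / pev p1 p2 \<tau> \<mu>)"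
  \<comment> \<open>On the line {\<tau>} \<times> T the function \<phi> is the constant \<alpha>, read off at \<mu> = 1 or -1.\<close>
  have "exc_pts n p1 p2 \<subseteq> (\<Union>\<tau>\<in>Z. {f \<tau> 1, f \<tau> (-1)} \<times> {\<tau>})"
  proof
    fix z assume "z \<in> exc_pts n p1 p2"
    then obtain \<alpha> \<tau> lam where z: "z = (\<alpha>, \<tau>)" and t1: "cmod \<tau> = 1" and l1: "cmod lam = 1"
      and pz: "pev p1 p2 \<tau> lam = 0" and line: "\<forall>\<mu>\<in>sphere 0 1. ptev n p1 p2 \<tau> \<mu> = \<alpha> * pev p1 p2 \<tau> \<mu>"
      unfolding exc_pts_def by auto
    have "poly p1 \<tau> = - lam * poly p2 \<tau>" using pz by (simp add: pev_def eq_neg_iff_add_eq_0 mult.commute)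
    then have "cmod (poly p1 \<tau>) = cmod (poly p2 \<tau>)" using l1 by (simp add: norm_mult)
    then have "poly p1 \<tau> * cnj (poly p1 \<tau>) = poly p2 \<tau> * cnj (poly p2 \<tau>)"
      by (metis complex_norm_square)
    then have "\<tau> \<in> Z"
      by (simp add: Z_def poly_refl_unimodular[OF deg1 t1] poly_refl_unimodular[OF deg2 t1] mult_ac)
    moreover have "pev p1 p2 \<tau> 1 \<noteq> 0 \<or> pev p1 p2 \<tau> (-1) \<noteq> 0"
      using p1_nonzero_circle[OF t1] by (auto simp: pev_def)
    then have "\<alpha> \<in> {f \<tau> 1, f \<tau> (-1)}" using line by (auto simp: f_def)
    ultimately show "z \<in> (\<Union>\<tau>\<in>Z. {f \<tau> 1, f \<tau> (-1)} \<times> {\<tau>})" using z by blast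
  qed
  then show ?thesis by (rule finite_subset) (use \<open>finite Z\<close> in auto)
qed

lemma W_continuous_off_exc_pts:
  assumes "z \<in> sphere 0 1 \<times> sphere 0 1 - exc_pts n p1 p2"
  shows "poly (refl n p1) (snd z) - fst z * poly p2 (snd z) \<noteq> 0"
    and "continuous (at z within sphere 0 1 \<times> sphere 0 1) (\<lambda>(x, \<zeta>). Wfun n p1 p2 x \<zeta>)"
proof -
  obtain x \<zeta> where z: "z = (x, \<zeta>)" by (cases z)
  show E: "poly (refl n p1) (snd z) - fst z * poly p2 (snd z) \<noteq> 0"
    using exc_pts_if_denominator_zero[of x \<zeta>] assms by (auto simp: z)
  have "isCont (\<lambda>w. Wfun n p1 p2 (fst w) (snd w)) z"
    unfolding Wfun_def using E by (intro continuous_intros) auto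
  then show "continuous (at z within sphere 0 1 \<times> sphere 0 1) (\<lambda>(x, \<zeta>). Wfun n p1 p2 x \<zeta>)"
    by (simp add: case_prod_beta' continuous_at_imp_continuous_within)
qed

lemma W_discontinuities_removable:
  assumes x1: "cmod x = 1"
  defines "D \<equiv> {\<zeta> \<in> sphere 0 1. \<not> continuous (at \<zeta> within sphere 0 1) (Wfun n p1 p2 x)}"
  shows "finite D \<and> (\<forall>\<zeta>\<in>D. \<exists>L. (Wfun n p1 p2 x \<longlongrightarrow> L) (at \<zeta> within sphere 0 1))"
proof (cases "denom_refl x = 0")
  case True
  \<comment> \<open>The denominator of W x vanishes identically on the circle, so W x = 0 there (x / 0 = 0).\<close>
  have "Wfun n p1 p2 x \<zeta> = 0" if "cmod \<zeta> = 1" for \<zeta>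
    using norm_denominator_circle[OF that, of x] True by (simp add: Wfun_def)
  then have "continuous (at \<zeta> within sphere 0 1) (Wfun n p1 p2 x)" if "\<zeta> \<in> sphere 0 1" for \<zeta>
    using that by (auto simp: continuous_within intro: Lim_transform_eventually[OF tendsto_const]
      simp: eventually_at_filter)
  then have "D = {}" by (auto simp: D_def)
  then show ?thesis by simp
next
  case False
  have sub: "D \<subseteq> {z. poly (denom_refl x) z = 0}"
  proof
    fix \<zeta> assume "\<zeta> \<in> D"
    then have z1: "cmod \<zeta> = 1" and disc: "\<not> continuous (at \<zeta> within sphere 0 1) (Wfun n p1 p2 x)"
      by (auto simp: D_def)
    have "isCont (Wfun n p1 p2 x) \<zeta>" if "poly (denom_refl x) \<zeta> \<noteq> 0"
      unfolding Wfun_def using that norm_denominator_circle[OF z1, of x] by (intro continuous_intros) auto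
    then show "\<zeta> \<in> {z. poly (denom_refl x) z = 0}"
      using disc continuous_at_imp_continuous_within by auto
  qed
  then have "finite D" using poly_roots_finite[OF False] by (rule finite_subset)
  moreover have "\<exists>L. (Wfun n p1 p2 x \<longlongrightarrow> L) (at \<zeta> within sphere 0 1)" if "\<zeta> \<in> D" for \<zeta>
    using that sub W_tendsto_at_boundary_zero[OF x1 _ _ False] by (auto simp: D_def)
  ultimately show ?thesis by blast
qed

end

theorem lemma3p7:
  fixes n :: nat and p1 p2 :: "complex poly"
  assumes n_pos: "n \<ge> 1"
    and deg: "degree p1 \<le> n" "degree p2 \<le> n"
    and no_zeros: "\<And>z1 z2. norm z1 < 1 \<Longrightarrow> norm z2 < 1 \<Longrightarrow> pev p1 p2 z1 z2 \<noteq> 0"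
    and deg_tilde: "refl n p1 \<noteq> 0" "max (degree (refl n p1)) (degree (refl n p2)) = n"
    and no_common: "coprime [:p1, p2:] [:refl n p2, refl n p1:]"
  shows "finite (exc_pts n p1 p2)
     \<and> (\<forall>z \<in> sphere 0 1 \<times> sphere 0 1 - exc_pts n p1 p2.
          poly (refl n p1) (snd z) - fst z * poly p2 (snd z) \<noteq> 0
          \<and> continuous (at z within sphere 0 1 \<times> sphere 0 1) (\<lambda>(x, \<zeta>). Wfun n p1 p2 x \<zeta>))
     \<and> (\<forall>\<alpha> \<in> sphere 0 1.
          finite {\<zeta> \<in> sphere 0 1. \<not> continuous (at \<zeta> within sphere 0 1) (Wfun n p1 p2 \<alpha>)}
          \<and> (\<forall>\<zeta> \<in> {\<zeta> \<in> sphere 0 1. \<not> continuous (at \<zeta> within sphere 0 1) (Wfun n p1 p2 \<alpha>)}.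
               \<exists>L. (Wfun n p1 p2 \<alpha> \<longlongrightarrow> L) (at \<zeta> within sphere 0 1))
          \<and> (\<exists>g. continuous_on (sphere 0 1) g \<and> bounded (g ` sphere 0 1)
               \<and> (AE t in lebesgue_on {0..1}. Wfun n p1 p2 \<alpha> (cis (2 * pi * t)) = g (cis (2 * pi * t)))))"
proof -
  interpret stable_pair n p1 p2
    using n_pos deg no_zeros no_common by unfold_locales
  have "\<forall>\<alpha> \<in> sphere 0 1.
          finite {\<zeta> \<in> sphere 0 1. \<not> continuous (at \<zeta> within sphere 0 1) (Wfun n p1 p2 \<alpha>)}
          \<and> (\<forall>\<zeta> \<in> {\<zeta> \<in> sphere 0 1. \<not> continuous (at \<zeta> within sphere 0 1) (Wfun n p1 p2 \<alpha>)}.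
               \<exists>L. (Wfun n p1 p2 \<alpha> \<longlongrightarrow> L) (at \<zeta> within sphere 0 1))"
    using W_discontinuities_removable by simp
  then show ?thesis
    using finite_exc_pts W_continuous_off_exc_pts removable_discontinuities_circle by blast
qed

end
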